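(* Let $(\Omega,\mathbb{P})$ be a probability space and let $T\colon\Omega\to\Omega$ be an ergodic measure-preserving transformation. Let $f\ge 0$ be a measurable function on $\Omega$ and let $m\ge 0$ be an integer. (a) If $f\in L^1(\mathbb{P})$ and $m>0$, then for $\mathbb{P}$-almost every $\omega$, $$\lim_{n\to\infty}\mathcal{M}_m\big(f(\omega),f(T\omega),\dots,f(T^{n-1}\omega)\big)=\int f\,\mathrm{d}\mathbb{P}.$$ (b) If $\log f\in L^1(\mathbb{P})$, then for $\mathbb{P}$-almost every $\omega$, $$\lim_{n\to\infty}\mathcal{M}_{n-m}\big(f(\omega),f(T\omega),\dots,f(T^{n-1}\omega)\big)=\exp\Big(\int\log f\,\mathrm{d}\mathbb{P}\Big).$$
   Context: For integers $1\le k\le n$, the elementary symmetric polynomial of degree $k$ in $n$ variables is $E_k(x_1,\dots,x_n)=\sum_{1\le i_1<\dots<i_k\le n}x_{i_1}\cdots x_{i_k}$. For nonnegative reals $x_1,\dots,x_n$, the $k$-th symmetric mean is $\mathcal{M}_k(x_1,\dots,x_n)=\big(E_k(x_1,\dots,x_n)/\binom{n}{k}\big)^{1/k}$. In (a) the limit is over $n\ge m$, and in (b) over $n>m$. *)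

theory Defs
  imports "HOL-Probability.Probability"
begin

definition esym :: "nat \<Rightarrow> nat \<Rightarrow> (nat \<Rightarrow> real) \<Rightarrow> real" where
  "esym k n x = (\<Sum>S\<in>{S. S \<subseteq> {..<n} \<and> card S = k}. \<Prod>i\<in>S. x i)"

definition symmean :: "nat \<Rightarrow> nat \<Rightarrow> (nat \<Rightarrow> real) \<Rightarrow> real" where
  "symmean k n x = root k (esym k n x / real (n choose k))"

definition mpt :: "'a measure \<Rightarrow> ('a \<Rightarrow> 'a) \<Rightarrow> bool" where
  "mpt M T \<longleftrightarrow> T \<in> M \<rightarrow>\<^sub>M M \<and> distr M M T = M"

definition ergodic :: "'a measure \<Rightarrow> ('a \<Rightarrow> 'a) \<Rightarrow> bool" where
  "ergodic M T \<longleftrightarrow> mpt M T \<and>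
     (\<forall>A\<in>sets M. T -` A \<inter> space M = A \<longrightarrow> measure M A = 0 \<or> measure M A = 1)"

end

(*
  By Birkhoff's ergodic theorem, proved here from the maximal ergodic inequality, the orbit
  averages of f, of its truncations min f K and of ln f converge almost surely to their integrals.
  The rest is deterministic.

  (a) For fixed m, m! E_m \<le> (\<Sum>x)^m bounds the m-th symmetric mean above by the average times
  a factor tending to 1. For entries bounded by K, m! E_m \<ge> \<Prod>j<m. (\<Sum>x - j K), so the
  symmetric mean of the truncated orbit is asymptotically at least the truncated average, which
  tends to \<integral>f as K \<rightarrow> \<infinity>.

  (b) Every product of n - m of the entries is the product of all n of them divided by m of
  them, so the (n-m)-th symmetric mean lies between the two values
  exp ((\<Sum>i<n. ln x_i \<plusminus> m max_(i<n) |ln x_i|) / (n - m)); convergence of the averages of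
  ln x_i forces max_(i<n) |ln x_i| = o(n).
*)
theory Submission
  imports Defs
begin

lemma tendsto_averages_if_bounded_deviations:
  fixes s :: "nat \<Rightarrow> real"
  assumes upper: "\<And>c. c \<in> \<rat> \<Longrightarrow> L < c \<Longrightarrow> bdd_above (range (\<lambda>n. s n - n * c))"
    and lower: "\<And>c. c \<in> \<rat> \<Longrightarrow> c < L \<Longrightarrow> bdd_below (range (\<lambda>n. s n - n * c))"
  shows "(\<lambda>n. s n / n) \<longlonglongrightarrow> L"
proof (rule order_tendstoI)
  fix a assume "L < a"
  then obtain c where c: "c \<in> \<rat>" "L < c" "c < a" using Rats_dense_in_real by blast
  then obtain K where K: "\<And>n. s n - n * c \<le> K" using upper by (meson bdd_above.E rangeI)
  have "(\<lambda>n. K / n + c) \<longlonglongrightarrow> c"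
    using tendsto_add[OF lim_const_over_n tendsto_const] by simp
  then have "eventually (\<lambda>n. K / n + c < a) sequentially" using c by (intro order_tendstoD)
  then show "eventually (\<lambda>n. s n / n < a) sequentially"
    using eventually_gt_at_top[of 0]
  proof eventually_elim
    case (elim n)
    then have "s n / n \<le> K / n + c" using K[of n] by (simp add: divide_le_eq algebra_simps)
    with elim show ?case by linarith
  qed
next
  fix a assume "a < L"
  then obtain c where c: "c \<in> \<rat>" "a < c" "c < L" using Rats_dense_in_real by blast
  then obtain K where K: "\<And>n. K \<le> s n - n * c" using lower by (meson bdd_below.E rangeI)
  have "(\<lambda>n. K / n + c) \<longlonglongrightarrow> c"
    using tendsto_add[OF lim_const_over_n tendsto_const] by simp
  then have "eventually (\<lambda>n. a < K / n + c) sequentially" using c by (intro order_tendstoD)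
  then show "eventually (\<lambda>n. a < s n / n) sequentially"
    using eventually_gt_at_top[of 0]
  proof eventually_elim
    case (elim n)
    then have "K / n + c \<le> s n / n" using K[of n] by (simp add: le_divide_eq algebra_simps)
    with elim show ?case by linarith
  qed
qed

lemma bdd_above_range_iff_nat: "bdd_above (range f) \<longleftrightarrow> (\<exists>K::nat. \<forall>n. f n \<le> real K)"
  for f :: "nat \<Rightarrow> real"
  by (meson bdd_above.E bdd_aboveI2 order_trans rangeI real_arch_simple)

locale mpt_system =
  fixes M :: "'a measure" and T :: "'a \<Rightarrow> 'a"
  assumes mpt: "mpt M T"
begin

lemma T_measurable[measurable]: "T \<in> M \<rightarrow>\<^sub>M M"
  using mpt unfolding mpt_def by simp

lemma funpow_T_measurable[measurable]: "T ^^ n \<in> M \<rightarrow>\<^sub>M M"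
  by (rule measurable_compose_n[OF T_measurable])

lemma funpow_T_in_space: "x \<in> space M \<Longrightarrow> (T ^^ n) x \<in> space M"
  by (rule measurable_space[OF funpow_T_measurable])

lemma distr_funpow_T: "distr M M (T ^^ n) = M"
proof (induction n)
  case 0
  then show ?case by (simp add: id_def distr_id)
next
  case (Suc n)
  have "distr M M (T ^^ Suc n) = distr (distr M M (T ^^ n)) M T"
    by (simp add: distr_distr)
  also have "\<dots> = M" using Suc.IH mpt unfolding mpt_def by simp
  finally show ?case .
qed

lemma integrable_comp_funpow_T:
  fixes h :: "'a \<Rightarrow> real"
  shows "integrable M h \<Longrightarrow> integrable M (\<lambda>x. h ((T ^^ n) x))"
  by (metis distr_funpow_T funpow_T_measurable borel_measurable_integrable integrable_distr_eq)

lemma integral_comp_funpow_T: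
  fixes h :: "'a \<Rightarrow> real"
  shows "integrable M h \<Longrightarrow> integral\<^sup>L M (\<lambda>x. h ((T ^^ n) x)) = integral\<^sup>L M h"
  by (metis distr_funpow_T funpow_T_measurable borel_measurable_integrable integral_distr)

lemma AE_comp_funpow_T:
  assumes "AE x in M. P x" and "{x \<in> space M. P x} \<in> sets M"
  shows "AE x in M. P ((T ^^ n) x)"
  using AE_distr_iff[OF funpow_T_measurable assms(2), of n] assms(1) by (metis distr_funpow_T)

definition birkhoff_sum :: "('a \<Rightarrow> real) \<Rightarrow> nat \<Rightarrow> 'a \<Rightarrow> real" where
  "birkhoff_sum h n x = (\<Sum>i<n. h ((T ^^ i) x))"

lemma birkhoff_sum_0[simp]: "birkhoff_sum h 0 x = 0"
  by (simp add: birkhoff_sum_def)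

lemma birkhoff_sum_Suc: "birkhoff_sum h (Suc n) x = h x + birkhoff_sum h n (T x)"
  unfolding birkhoff_sum_def sum.lessThan_Suc_shift by (simp add: funpow_Suc_right del: funpow.simps)

lemma birkhoff_sum_diff_const: "birkhoff_sum (\<lambda>x. h x - c) n x = birkhoff_sum h n x - n * c"
  by (simp add: birkhoff_sum_def sum_subtractf)

lemma integrable_birkhoff_sum: "integrable M h \<Longrightarrow> integrable M (birkhoff_sum h n)"
  unfolding birkhoff_sum_def by (auto intro!: integrable_comp_funpow_T)

lemma birkhoff_sum_const_diff: "birkhoff_sum (\<lambda>x. c - h x) n x = n * c - birkhoff_sum h n x"
  by (simp add: birkhoff_sum_def sum_subtractf)

lemma birkhoff_sum_measurable[measurable]:
  "h \<in> borel_measurable M \<Longrightarrow> birkhoff_sum h n \<in> borel_measurable M"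
  unfolding birkhoff_sum_def by (auto intro!: borel_measurable_sum measurable_compose[OF funpow_T_measurable])

lemma bdd_above_birkhoff_sum_shift:
  "bdd_above (range (\<lambda>n. birkhoff_sum h n (T x))) \<longleftrightarrow> bdd_above (range (\<lambda>n. birkhoff_sum h n x))"
proof
  assume "bdd_above (range (\<lambda>n. birkhoff_sum h n (T x)))"
  then obtain K where K: "\<And>n. birkhoff_sum h n (T x) \<le> K" by (meson bdd_above.E rangeI)
  have "birkhoff_sum h n x \<le> max 0 (h x + K)" for n
    using K by (cases n) (auto simp: birkhoff_sum_Suc max.coboundedI2)
  then show "bdd_above (range (\<lambda>n. birkhoff_sum h n x))" by (meson bdd_aboveI2)
next
  assume "bdd_above (range (\<lambda>n. birkhoff_sum h n x))"
  then obtain K where K: "\<And>n. birkhoff_sum h n x \<le> K" by (meson bdd_above.E rangeI)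
  have "birkhoff_sum h n (T x) \<le> K - h x" for n
    using K[of "Suc n"] by (simp add: birkhoff_sum_Suc)
  then show "bdd_above (range (\<lambda>n. birkhoff_sum h n (T x)))" by (meson bdd_aboveI2)
qed

definition max_birkhoff_sum :: "('a \<Rightarrow> real) \<Rightarrow> nat \<Rightarrow> 'a \<Rightarrow> real" where
  "max_birkhoff_sum h N x = Max ((\<lambda>k. birkhoff_sum h k x) ` {..N})"

lemma birkhoff_sum_le_max: "k \<le> N \<Longrightarrow> birkhoff_sum h k x \<le> max_birkhoff_sum h N x"
  unfolding max_birkhoff_sum_def by (intro Max_ge) auto

lemma max_birkhoff_sum_nonneg: "max_birkhoff_sum h N x \<ge> 0"
  using birkhoff_sum_le_max[of 0 N h x] by simp

lemma max_birkhoff_sum_attained: "\<exists>k\<le>N. max_birkhoff_sum h N x = birkhoff_sum h k x"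
proof -
  have "max_birkhoff_sum h N x \<in> (\<lambda>k. birkhoff_sum h k x) ` {..N}"
    unfolding max_birkhoff_sum_def by (intro Max_in) auto
  then show ?thesis by auto
qed

lemma integrable_max_birkhoff_sum:
  assumes "integrable M h" shows "integrable M (max_birkhoff_sum h N)"
proof (induction N)
  case 0
  then show ?case by (simp add: max_birkhoff_sum_def)
next
  case (Suc N)
  have "max_birkhoff_sum h (Suc N) = (\<lambda>x. max (birkhoff_sum h (Suc N) x) (max_birkhoff_sum h N x))"
    by (auto simp: max_birkhoff_sum_def atMost_Suc Max_insert)
  then show ?case using Suc integrable_birkhoff_sum[OF assms] by (simp add: integrable_max)
qed

lemma max_birkhoff_sum_le_shift:
  assumes "max_birkhoff_sum h N x > 0"
  shows "max_birkhoff_sum h N x \<le> h x + max_birkhoff_sum h N (T x)"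
proof -
  obtain k where k: "k \<le> N" "max_birkhoff_sum h N x = birkhoff_sum h k x"
    using max_birkhoff_sum_attained by blast
  with assms obtain j where j: "k = Suc j" by (cases k) auto
  have "birkhoff_sum h j (T x) \<le> max_birkhoff_sum h N (T x)"
    using k j by (intro birkhoff_sum_le_max) simp
  then show ?thesis using k j birkhoff_sum_Suc by simp
qed

theorem maximal_ergodic_inequality:
  assumes h: "integrable M h"
  shows "integral\<^sup>L M (\<lambda>x. if max_birkhoff_sum h N x > 0 then h x else 0) \<ge> 0"
proof -
  let ?F = "max_birkhoff_sum h N"
  have F: "integrable M ?F" by (rule integrable_max_birkhoff_sum[OF h])
  have FT: "integrable M (\<lambda>x. ?F (T x))" and "integral\<^sup>L M (\<lambda>x. ?F (T x)) = integral\<^sup>L M ?F"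
    using integrable_comp_funpow_T[OF F, of 1] integral_comp_funpow_T[OF F, of 1] by simp_all
  then have "0 = integral\<^sup>L M (\<lambda>x. ?F x - ?F (T x))" using F by simp
  also have "\<dots> \<le> integral\<^sup>L M (\<lambda>x. if ?F x > 0 then h x else 0)"
  proof (rule integral_mono)
    show "integrable M (\<lambda>x. if ?F x > 0 then h x else 0)"
      using h F by (intro Bochner_Integration.integrable_bound[OF h]) auto
    show "?F x - ?F (T x) \<le> (if ?F x > 0 then h x else 0)" for x
      using max_birkhoff_sum_le_shift[of h N x] max_birkhoff_sum_nonneg[of h N x]
        max_birkhoff_sum_nonneg[of h N "T x"] by auto
  qed (use F FT in auto)
  finally show ?thesis .
qed

end

locale ergodic_system = prob_space M for M :: "'a measure" +
  fixes T :: "'a \<Rightarrow> 'a"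
  assumes ergodic: "ergodic M T"

sublocale ergodic_system \<subseteq> mpt_system M T
  using ergodic by unfold_locales (simp add: ergodic_def)

context ergodic_system
begin

text \<open>The set where the Birkhoff sums are unbounded above is T-invariant, hence trivial; it
  cannot have full measure, since the maximal ergodic theorem would then force \<open>\<integral>h \<ge> 0\<close>.\<close>
lemma AE_bdd_above_birkhoff_sum:
  assumes h: "integrable M h" and neg: "integral\<^sup>L M h < 0"
  shows "AE x in M. bdd_above (range (\<lambda>n. birkhoff_sum h n x))"
proof -
  have [measurable]: "h \<in> borel_measurable M" using h by auto
  define B where "B = {x \<in> space M. \<not> bdd_above (range (\<lambda>n. birkhoff_sum h n x))}"
  have B: "B \<in> sets M"
    unfolding B_def bdd_above_range_iff_nat by measurable
  have "T -` B \<inter> space M = B"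
    using measurable_space[OF T_measurable] by (auto simp: B_def bdd_above_birkhoff_sum_shift)
  then have "measure M B = 0 \<or> measure M B = 1" using ergodic B unfolding ergodic_def by blast
  moreover have "measure M B \<noteq> 1"
  proof
    assume "measure M B = 1"
    then have AE_B: "AE x in M. x \<in> B" using B by (simp add: prob_space.AE_prob_1 prob_space_axioms)
    define g where "g N x = (if max_birkhoff_sum h N x > 0 then h x else 0)" for N x
    have "(\<lambda>N. integral\<^sup>L M (g N)) \<longlonglongrightarrow> integral\<^sup>L M h"
    proof (rule integral_dominated_convergence[where w="\<lambda>x. norm (h x)"])
      show "g N \<in> borel_measurable M" for N
        using integrable_max_birkhoff_sum[OF h, of N] unfolding g_def by measurable
      show "AE x in M. (\<lambda>N. g N x) \<longlonglongrightarrow> h x"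
        using AE_B
      proof eventually_elim
        case (elim x)
        then obtain n where n: "birkhoff_sum h n x > 0"
          unfolding B_def by (metis (mono_tags, lifting) bdd_aboveI2 mem_Collect_eq not_le)
        have "eventually (\<lambda>N. g N x = h x) sequentially"
          using eventually_ge_at_top[of n]
        proof eventually_elim
          case (elim N)
          then show ?case using birkhoff_sum_le_max[OF elim, of h x] n by (simp add: g_def)
        qed
        then show ?case by (rule tendsto_eventually)
      qed
    qed (use h in \<open>auto simp: g_def\<close>)
    moreover have "integral\<^sup>L M (g N) \<ge> 0" for N
      unfolding g_def by (rule maximal_ergodic_inequality[OF h])
    ultimately have "integral\<^sup>L M h \<ge> 0" by (simp add: LIMSEQ_le_const)
    then show False using neg by simp
  qed
  ultimately have "B \<in> null_sets M" using B by (simp add: emeasure_eq_measure null_sets_def)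
  from AE_not_in[OF this] AE_space show ?thesis
    by eventually_elim (auto simp: B_def)
qed

theorem birkhoff_ergodic_theorem:
  assumes h: "integrable M h"
  shows "AE x in M. (\<lambda>n. birkhoff_sum h n x / n) \<longlonglongrightarrow> integral\<^sup>L M h"
proof -
  let ?L = "integral\<^sup>L M h"
  have "AE x in M. bdd_above (range (\<lambda>n. birkhoff_sum h n x - n * c))" if "?L < c" for c
    using AE_bdd_above_birkhoff_sum[of "\<lambda>x. h x - c"] h that prob_space
    by (simp add: birkhoff_sum_diff_const)
  then have upper: "AE x in M. \<forall>c\<in>\<rat>. ?L < c \<longrightarrow> bdd_above (range (\<lambda>n. birkhoff_sum h n x - n * c))"
    by (simp add: AE_ball_countable countable_rat)
  have "AE x in M. bdd_below (range (\<lambda>n. birkhoff_sum h n x - n * c))" if "c < ?L" for c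
    using AE_bdd_above_birkhoff_sum[of "\<lambda>x. c - h x"] h that prob_space
    by (simp add: birkhoff_sum_const_diff bdd_above_uminus[symmetric] image_image)
  then have lower: "AE x in M. \<forall>c\<in>\<rat>. c < ?L \<longrightarrow> bdd_below (range (\<lambda>n. birkhoff_sum h n x - n * c))"
    by (simp add: AE_ball_countable countable_rat)
  from upper lower show ?thesis
  proof eventually_elim
    case (elim x)
    then show ?case by (intro tendsto_averages_if_bounded_deviations) auto
  qed
qed

end

lemma esym_0[simp]: "esym 0 n x = 1"
proof -
  have "{S. S \<subseteq> {..<n} \<and> card S = 0} = {{}}"
    by (auto dest: finite_subset)
  then show ?thesis by (simp add: esym_def)
qed

lemma esym_Suc_0[simp]: "esym (Suc k) 0 x = 0"
  by (simp add: esym_def)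

lemma esym_Suc_Suc: "esym (Suc k) (Suc n) x = esym (Suc k) n x + x n * esym k n x"
proof -
  let ?E = "\<lambda>k (n::nat). {S. S \<subseteq> {..<n} \<and> card S = k}"
  have fin: "finite (?E k n)" for k n
    by (rule finite_subset[of _ "Pow {..<n}"]) auto
  have split: "?E (Suc k) (Suc n) = ?E (Suc k) n \<union> insert n ` ?E k n"
  proof (intro equalityI subsetI)
    fix S assume S: "S \<in> ?E (Suc k) (Suc n)"
    then have "finite S" using finite_subset by blast
    show "S \<in> ?E (Suc k) n \<union> insert n ` ?E k n"
    proof (cases "n \<in> S")
      case True
      then have "S = insert n (S - {n})" "S - {n} \<in> ?E k n"
        using S \<open>finite S\<close> by (auto simp: lessThan_Suc)
      then show ?thesis by blast
    next
      case False
      then show ?thesis using S by (auto simp: less_Suc_eq)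
    qed
  qed (auto simp: card_insert_if finite_subset[of _ "{..<_}"] less_Suc_eq)
  have inj: "inj_on (insert n) (?E k n)"
    by (rule inj_onI) (metis insert_ident lessThan_iff less_irrefl mem_Collect_eq subsetD)
  have "esym (Suc k) (Suc n) x = esym (Suc k) n x + (\<Sum>S\<in>insert n ` ?E k n. prod x S)"
    unfolding esym_def split using fin by (intro sum.union_disjoint) auto
  also have "(\<Sum>S\<in>insert n ` ?E k n. prod x S) = (\<Sum>S\<in>?E k n. x n * prod x S)"
    unfolding sum.reindex[OF inj] o_def
    by (intro sum.cong refl prod.insert) (auto dest: finite_subset)
  finally show ?thesis by (simp add: esym_def sum_distrib_left)
qed

lemma esym_1: "esym 1 n x = (\<Sum>i<n. x i)"
  by (induction n) (simp_all add: esym_Suc_Suc[where k=0, simplified])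

lemma esym_nonneg: "(\<And>i. x i \<ge> 0) \<Longrightarrow> esym k n x \<ge> 0"
  unfolding esym_def by (intro sum_nonneg prod_nonneg) auto

lemma esym_mono: "(\<And>i. 0 \<le> y i) \<Longrightarrow> (\<And>i. y i \<le> x i) \<Longrightarrow> esym k n y \<le> esym k n x"
  unfolding esym_def by (intro sum_mono prod_mono) auto

lemma add_power_ge_two_terms:
  fixes a b :: real
  assumes "a \<ge> 0" "b \<ge> 0"
  shows "a ^ Suc j + Suc j * b * a ^ j \<le> (a + b) ^ Suc j"
proof (induction j)
  case (Suc j)
  have "a ^ Suc (Suc j) + Suc (Suc j) * b * a ^ Suc j \<le> (a + b) * (a ^ Suc j + Suc j * b * a ^ j)"
    using assms by (simp add: algebra_simps)
  also have "\<dots> \<le> (a + b) * (a + b) ^ Suc j"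
    using Suc assms by (intro mult_left_mono) auto
  finally show ?case by simp
qed simp

lemma fact_mult_esym_le_sum_power:
  assumes "\<And>i. x i \<ge> 0"
  shows "fact k * esym k n x \<le> (\<Sum>i<n. x i) ^ k"
proof (induction n arbitrary: k)
  case 0
  then show ?case by (cases k) auto
next
  case (Suc n)
  show ?case
  proof (cases k)
    case (Suc j)
    let ?P = "\<Sum>i<n. x i"
    have "fact k * esym k (Suc n) x = fact (Suc j) * esym (Suc j) n x + Suc j * x n * (fact j * esym j n x)"
      using Suc by (simp add: esym_Suc_Suc algebra_simps)
    also have "\<dots> \<le> ?P ^ Suc j + Suc j * x n * ?P ^ j"
      using Suc.IH[of "Suc j"] Suc.IH[of j] assms[of n] by (intro add_mono mult_left_mono) auto
    also have "\<dots> \<le> (?P + x n) ^ Suc j"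
      using assms by (intro add_power_ge_two_terms sum_nonneg) auto
    finally show ?thesis using Suc by simp
  qed simp
qed

text \<open>Expanding \<open>(\<Sum>i. x i) * E_k\<close>, the products over pairs \<open>(i, S)\<close> with \<open>i \<notin> S\<close> give
  \<open>(k+1) E_(k+1)\<close>, and those with \<open>i \<in> S\<close> contribute at most \<open>k K E_k\<close>.\<close>
lemma esym_Suc_ge:
  assumes "\<And>i. x i \<ge> 0" "\<And>i. x i \<le> K"
  shows "((\<Sum>i<n. x i) - k * K) * esym k n x \<le> Suc k * esym (Suc k) n x"
proof (induction n arbitrary: k)
  case 0
  have "K \<ge> 0" using assms[of 0] by linarith
  then show ?case using esym_nonneg[OF assms(1), of k 0] by simp
next
  case (Suc n)
  show ?case
  proof (cases k)
    case 0
    then show ?thesis using esym_1[of "Suc n" x] by simp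
  next
    case (Suc j)
    let ?P = "\<Sum>i<n. x i" and ?x = "x n"
    have "?x * ((?P + ?x - Suc j * K) * esym j n x) \<le> ?x * ((?P - j * K) * esym j n x)"
      using assms(1,2)[of n] esym_nonneg[of x j n, OF assms(1)]
      by (intro mult_left_mono mult_right_mono) (auto simp: algebra_simps)
    also have "\<dots> \<le> ?x * (Suc j * esym (Suc j) n x)"
      using assms Suc.IH[of j] by (intro mult_left_mono) auto
    finally have step: "?x * ((?P + ?x - Suc j * K) * esym j n x) \<le> ?x * (Suc j * esym (Suc j) n x)" .
    have "((\<Sum>i<Suc n. x i) - k * K) * esym k (Suc n) x
        = (?P - Suc j * K) * esym (Suc j) n x + ?x * esym (Suc j) n x
          + ?x * ((?P + ?x - Suc j * K) * esym j n x)"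
      using Suc by (simp add: esym_Suc_Suc algebra_simps)
    also have "\<dots> \<le> Suc (Suc j) * esym (Suc (Suc j)) n x + ?x * esym (Suc j) n x
          + ?x * (Suc j * esym (Suc j) n x)"
      using Suc.IH[of "Suc j"] step by linarith
    also have "\<dots> = Suc k * esym (Suc k) (Suc n) x"
      using Suc by (simp add: esym_Suc_Suc algebra_simps)
    finally show ?thesis .
  qed
qed

lemma prod_le_fact_mult_esym:
  assumes "\<And>i. x i \<ge> 0" "\<And>i. x i \<le> K"
  shows "(\<Prod>j<k. max 0 ((\<Sum>i<n. x i) - real j * K)) \<le> fact k * esym k n x"
proof (induction k)
  case (Suc k)
  let ?P = "\<Sum>i<n. x i"
  show ?case
  proof (cases "?P - k * K \<ge> 0")
    case True
    have "(\<Prod>j<Suc k. max 0 (?P - real j * K)) = (?P - k * K) * (\<Prod>j<k. max 0 (?P - real j * K))"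
      using True by simp
    also have "\<dots> \<le> (?P - k * K) * (fact k * esym k n x)"
      using True Suc.IH by (intro mult_left_mono) auto
    also have "\<dots> \<le> fact k * (Suc k * esym (Suc k) n x)"
      using esym_Suc_ge[OF assms, where n=n and k=k] by (simp add: mult_left_mono)
    also have "\<dots> = fact (Suc k) * esym (Suc k) n x" by (simp add: algebra_simps)
    finally show ?thesis .
  next
    case False
    then show ?thesis using esym_nonneg[OF assms(1), of "Suc k" n] by simp
  qed
qed simp

lemma of_nat_choose_eq_power_prod:
  assumes "0 < n"
  shows "real (n choose m) = real n ^ m * (\<Prod>j<m. 1 - real j / real n) / fact m"
proof -
  have "fact m * real (n choose m) = (\<Prod>j<m. real n - real j)"
    using gbinomial_mult_fact[of m "real n"] by (simp add: binomial_gbinomial atLeast0LessThan)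
  also have "\<dots> = (\<Prod>j<m. real n * (1 - real j / real n))"
    using assms by (intro prod.cong) (auto simp: field_simps)
  also have "\<dots> = real n ^ m * (\<Prod>j<m. 1 - real j / real n)"
    by (simp add: prod.distrib)
  finally show ?thesis by (simp add: field_simps)
qed

lemma prod_one_minus_ratio_pos: "m \<le> n \<Longrightarrow> 0 < (\<Prod>j<m. 1 - real j / real n)"
  by (intro prod_pos) (auto simp: field_simps)

lemma symmean_mono:
  assumes "\<And>i. 0 \<le> y i" "\<And>i. y i \<le> x i"
  shows "symmean m n y \<le> symmean m n x"
proof (cases "m = 0")
  case False
  then show ?thesis
    unfolding symmean_def using esym_mono[OF assms]
    by (intro real_root_le_mono divide_right_mono) auto
qed (simp add: symmean_def)

lemma symmean_le_mean_bound:
  assumes m: "0 < m" "m \<le> n" and x: "\<And>i. 0 \<le> x i"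
  shows "symmean m n x \<le> root m (((\<Sum>i<n. x i) / n) ^ m / (\<Prod>j<m. 1 - real j / real n))"
proof -
  let ?q = "\<Prod>j<m. 1 - real j / real n"
  have q: "?q > 0" using prod_one_minus_ratio_pos[OF m(2)] .
  have n: "0 < n" using m by simp
  have "esym m n x / real (n choose m) = fact m * esym m n x / (real n ^ m * ?q)"
    using n q by (simp add: of_nat_choose_eq_power_prod field_simps)
  also have "\<dots> \<le> (\<Sum>i<n. x i) ^ m / (real n ^ m * ?q)"
    using fact_mult_esym_le_sum_power[OF x] q n by (intro divide_right_mono) auto
  also have "\<dots> = ((\<Sum>i<n. x i) / n) ^ m / ?q"
    by (simp add: power_divide field_simps)
  finally show ?thesis unfolding symmean_def using m by (intro real_root_le_mono) auto
qed

lemma symmean_ge_of_bounded: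
  assumes m: "0 < m" "m \<le> n" and x: "\<And>i. 0 \<le> x i" "\<And>i. x i \<le> K"
  shows "root m (\<Prod>j<m. max 0 ((\<Sum>i<n. x i) / n - real j * K / n)) \<le> symmean m n x"
proof -
  let ?q = "\<Prod>j<m. 1 - real j / real n"
  let ?Q = "\<Prod>j<m. max 0 ((\<Sum>i<n. x i) - real j * K)"
  have q: "0 < ?q" "?q \<le> 1"
    using prod_one_minus_ratio_pos[OF m(2)] m by (auto intro!: prod_le_1 simp: field_simps)
  have n: "0 < n" using m by simp
  have "(\<Prod>j<m. max 0 ((\<Sum>i<n. x i) / n - real j * K / n)) = (\<Prod>j<m. max 0 ((\<Sum>i<n. x i) - real j * K) / n)"
    using n by (intro prod.cong) (auto simp: max_def field_simps)
  also have "\<dots> = ?Q / real n ^ m" by (simp add: prod_dividef)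
  also have "\<dots> \<le> ?Q / (real n ^ m * ?q)"
    using q n by (intro divide_left_mono prod_nonneg) (auto intro!: mult_left_le)
  also have "\<dots> \<le> fact m * esym m n x / (real n ^ m * ?q)"
    using prod_le_fact_mult_esym[OF x] q n by (intro divide_right_mono) auto
  also have "\<dots> = esym m n x / real (n choose m)"
    using n q by (simp add: of_nat_choose_eq_power_prod field_simps)
  finally show ?thesis unfolding symmean_def using m by (intro real_root_le_mono) auto
qed

lemma tendsto_symmean_if_truncated_means:
  fixes x :: "nat \<Rightarrow> real" and \<mu> :: real and \<mu>K :: "nat \<Rightarrow> real"
  assumes m: "0 < m" and x: "\<And>i. 0 \<le> x i"
    and mean: "(\<lambda>n. (\<Sum>i<n. x i) / n) \<longlonglongrightarrow> \<mu>"
    and truncated_mean: "\<And>K. (\<lambda>n. (\<Sum>i<n. min (x i) (real K)) / n) \<longlonglongrightarrow> \<mu>K K"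
    and truncation_limit: "\<mu>K \<longlonglongrightarrow> \<mu>"
  shows "(\<lambda>n. symmean m n x) \<longlonglongrightarrow> \<mu>"
proof (rule order_tendstoI)
  fix a assume "a < \<mu>"
  then obtain K where "a < \<mu>K K"
    using order_tendstoD(1)[OF truncation_limit] eventually_sequentially by fastforce
  moreover have "0 \<le> \<mu>K K"
    by (rule LIMSEQ_le_const[OF truncated_mean]) (auto intro!: divide_nonneg_nonneg sum_nonneg x)
  moreover have "(\<lambda>n. root m (\<Prod>j<m. max 0 ((\<Sum>i<n. min (x i) (real K)) / n - real j * K / n)))
      \<longlonglongrightarrow> root m (\<Prod>j<m. max 0 (\<mu>K K - 0))"
    by (intro tendsto_intros truncated_mean lim_const_over_n)
  ultimately have "eventually (\<lambda>n. a < root m (\<Prod>j<m. max 0 ((\<Sum>i<n. min (x i) (real K)) / n - real j * K / n))) sequentially"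
    using real_root_power_cancel[OF m] by (intro order_tendstoD(1)) auto
  then show "eventually (\<lambda>n. a < symmean m n x) sequentially"
    using eventually_ge_at_top[of m]
  proof eventually_elim
    case (elim n)
    have "root m (\<Prod>j<m. max 0 ((\<Sum>i<n. min (x i) (real K)) / n - real j * K / n))
        \<le> symmean m n (\<lambda>i. min (x i) (real K))"
      using m elim(2) x by (intro symmean_ge_of_bounded) auto
    also have "\<dots> \<le> symmean m n x" using x by (intro symmean_mono) auto
    finally show ?case using elim(1) by linarith
  qed
next
  fix a assume "\<mu> < a"
  have "0 \<le> \<mu>"
    by (rule LIMSEQ_le_const[OF mean]) (auto intro!: divide_nonneg_nonneg sum_nonneg x)
  moreover have "(\<lambda>n. root m (((\<Sum>i<n. x i) / n) ^ m / (\<Prod>j<m. 1 - real j / real n)))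
      \<longlonglongrightarrow> root m (\<mu> ^ m / (\<Prod>j<m. 1 - 0))"
    by (intro tendsto_intros mean lim_const_over_n) simp
  ultimately have "eventually (\<lambda>n. root m (((\<Sum>i<n. x i) / n) ^ m / (\<Prod>j<m. 1 - real j / real n)) < a) sequentially"
    using real_root_power_cancel[OF m] \<open>\<mu> < a\<close> by (intro order_tendstoD(2)) auto
  then show "eventually (\<lambda>n. symmean m n x < a) sequentially"
    using eventually_ge_at_top[of m]
  proof eventually_elim
    case (elim n)
    have "symmean m n x \<le> root m (((\<Sum>i<n. x i) / n) ^ m / (\<Prod>j<m. 1 - real j / real n))"
      using m elim(2) x by (rule symmean_le_mean_bound)
    then show ?case using elim(1) by linarith
  qed
qed

definition max_abs :: "(nat \<Rightarrow> real) \<Rightarrow> nat \<Rightarrow> real" where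
  "max_abs a n = Max (insert 0 ((\<lambda>i. \<bar>a i\<bar>) ` {..<n}))"

lemma max_abs_nonneg: "0 \<le> max_abs a n"
  unfolding max_abs_def by (rule Max_ge) auto

lemma abs_le_max_abs: "i < n \<Longrightarrow> \<bar>a i\<bar> \<le> max_abs a n"
  unfolding max_abs_def by (rule Max_ge) auto

lemma max_abs_le: "0 \<le> B \<Longrightarrow> (\<And>i. i < n \<Longrightarrow> \<bar>a i\<bar> \<le> B) \<Longrightarrow> max_abs a n \<le> B"
  unfolding max_abs_def by (subst Max_le_iff) auto

lemma tendsto_term_over_Suc_if_averages:
  fixes a :: "nat \<Rightarrow> real"
  assumes "(\<lambda>n. (\<Sum>i<n. a i) / n) \<longlonglongrightarrow> L"
  shows "(\<lambda>n. a n / Suc n) \<longlonglongrightarrow> 0"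
proof -
  have "(n / Suc n) * ((\<Sum>i<n. a i) / n) = (\<Sum>i<n. a i) / Suc n" for n
    by (cases "n = 0") simp_all
  then have "a n / Suc n = (\<Sum>i<Suc n. a i) / Suc n - (n / Suc n) * ((\<Sum>i<n. a i) / n)" for n
    by (simp add: add_divide_distrib)
  moreover have "(\<lambda>n. (\<Sum>i<Suc n. a i) / Suc n - (n / Suc n) * ((\<Sum>i<n. a i) / n)) \<longlonglongrightarrow> L - 1 * L"
    using assms by (intro tendsto_intros LIMSEQ_n_over_Suc_n LIMSEQ_Suc[OF assms])
  ultimately show ?thesis by simp
qed

lemma tendsto_max_abs_over_n:
  fixes a :: "nat \<Rightarrow> real"
  assumes "(\<lambda>n. a n / Suc n) \<longlonglongrightarrow> 0"
  shows "(\<lambda>n. max_abs a n / n) \<longlonglongrightarrow> 0"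
proof (rule order_tendstoI)
  show "eventually (\<lambda>n. c < max_abs a n / n) sequentially" if "c < 0" for c
    using that max_abs_nonneg[of a] by (intro always_eventually) (simp add: less_le_trans)
next
  fix c :: real assume "0 < c"
  obtain N where N: "\<And>i. N \<le> i \<Longrightarrow> \<bar>a i\<bar> / Suc i < c / 2"
    using order_tendstoD(2)[OF tendsto_rabs[OF assms], of "c / 2"] \<open>0 < c\<close>
    by (auto simp: eventually_sequentially abs_divide)
  have "eventually (\<lambda>n. max_abs a N / n < c / 2) sequentially"
    using \<open>0 < c\<close> by (intro order_tendstoD(2)[OF lim_const_over_n]) simp
  then show "eventually (\<lambda>n. max_abs a n / n < c) sequentially"
    using eventually_gt_at_top[of 0]
  proof eventually_elim
    case (elim n)
    have "max_abs a n \<le> max_abs a N + c / 2 * n"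
    proof (rule max_abs_le)
      fix i assume "i < n"
      show "\<bar>a i\<bar> \<le> max_abs a N + c / 2 * n"
      proof (cases "i < N")
        case True
        moreover have "0 \<le> c / 2 * n" using \<open>0 < c\<close> by simp
        ultimately show ?thesis using abs_le_max_abs[OF True, of a] by linarith
      next
        case False
        then have "\<bar>a i\<bar> \<le> c / 2 * Suc i" using N[of i] by (simp add: divide_less_eq)
        also have "\<dots> \<le> c / 2 * n" using \<open>i < n\<close> \<open>0 < c\<close> by simp
        finally show ?thesis using max_abs_nonneg[of a N] by simp
      qed
    qed (use max_abs_nonneg \<open>0 < c\<close> in \<open>auto intro: add_nonneg_nonneg\<close>)
    then have "max_abs a n / n \<le> (max_abs a N + c / 2 * n) / n"
      by (rule divide_right_mono) simp
    also have "\<dots> = max_abs a N / n + c / 2"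
      using elim(2) by (simp add: add_divide_distrib)
    finally have "max_abs a n / n \<le> max_abs a N / n + c / 2" .
    then show ?case using elim(1) by linarith
  qed
qed

lemma symmean_complementary_bounds:
  fixes x :: "nat \<Rightarrow> real"
  assumes x: "\<And>i. 0 < x i" and "m < n"
  defines "A \<equiv> \<Sum>i<n. ln (x i)" and "\<Lambda> \<equiv> max_abs (\<lambda>i. ln (x i)) n"
  shows "exp ((A - m * \<Lambda>) / real (n - m)) \<le> symmean (n - m) n x"
    and "symmean (n - m) n x \<le> exp ((A + m * \<Lambda>) / real (n - m))"
proof -
  let ?I = "{S. S \<subseteq> {..<n} \<and> card S = n - m}"
  have bounds: "exp (A - m * \<Lambda>) \<le> prod x S \<and> prod x S \<le> exp (A + m * \<Lambda>)" if S: "S \<in> ?I" for S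
  proof -
    have "finite S" using S finite_subset by blast
    have "\<bar>\<Sum>i\<in>{..<n} - S. ln (x i)\<bar> \<le> (\<Sum>i\<in>{..<n} - S. \<bar>ln (x i)\<bar>)"
      by (rule sum_abs)
    also have "\<dots> \<le> card ({..<n} - S) * \<Lambda>"
      unfolding \<Lambda>_def by (rule sum_bounded_above) (simp add: abs_le_max_abs[of _ n "\<lambda>i. ln (x i)"])
    also have "card ({..<n} - S) = m"
      using S \<open>m < n\<close> \<open>finite S\<close> by (simp add: card_Diff_subset)
    finally have "\<bar>\<Sum>i\<in>{..<n} - S. ln (x i)\<bar> \<le> m * \<Lambda>" .
    moreover have "prod x S = exp (A - (\<Sum>i\<in>{..<n} - S. ln (x i)))"
      using S x \<open>finite S\<close> by (simp add: exp_sum sum_diff A_def)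
    ultimately show ?thesis by (simp add: abs_le_iff)
  qed
  have card: "real (card ?I) = real (n choose (n - m))" and "0 < real (n choose (n - m))"
    using n_subsets[of "{..<n}" "n - m"] \<open>m < n\<close> by simp_all
  then have "exp (A - m * \<Lambda>) \<le> esym (n - m) n x / real (n choose (n - m))"
    and "esym (n - m) n x / real (n choose (n - m)) \<le> exp (A + m * \<Lambda>)"
    using sum_bounded_below[where A="?I" and f="prod x" and K="exp (A - m * \<Lambda>)"]
      sum_bounded_above[where A="?I" and f="prod x" and K="exp (A + m * \<Lambda>)"] bounds
    by (auto simp: esym_def field_simps)
  moreover have "root (n - m) (exp t) = exp (t / real (n - m))" for t
    using \<open>m < n\<close> by (simp add: root_powr_inverse powr_def)
  ultimately show "exp ((A - m * \<Lambda>) / real (n - m)) \<le> symmean (n - m) n x"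
    and "symmean (n - m) n x \<le> exp ((A + m * \<Lambda>) / real (n - m))"
    unfolding symmean_def using \<open>m < n\<close> by (metis real_root_le_mono zero_less_diff)+
qed

lemma tendsto_symmean_complementary_if_log_mean:
  fixes x :: "nat \<Rightarrow> real"
  assumes x: "\<And>i. 0 < x i" and mean: "(\<lambda>n. (\<Sum>i<n. ln (x i)) / n) \<longlonglongrightarrow> L"
  shows "(\<lambda>n. symmean (n - m) n x) \<longlonglongrightarrow> exp L"
proof -
  let ?A = "\<lambda>n. \<Sum>i<n. ln (x i)" and ?\<Lambda> = "max_abs (\<lambda>i. ln (x i))"
  have max_abs_lim: "(\<lambda>n. ?\<Lambda> n / n) \<longlonglongrightarrow> 0"
    using mean by (intro tendsto_max_abs_over_n tendsto_term_over_Suc_if_averages)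
  have bound_lim: "(\<lambda>n. exp ((?A n + s * ?\<Lambda> n) / real (n - m))) \<longlonglongrightarrow> exp L" for s
  proof -
    have "(\<lambda>n. exp ((?A n / n + s * (?\<Lambda> n / n)) / (1 - m / n))) \<longlonglongrightarrow> exp ((L + s * 0) / (1 - 0))"
      by (intro tendsto_intros mean max_abs_lim) simp
    then have "(\<lambda>n. exp ((?A n / n + s * (?\<Lambda> n / n)) / (1 - m / n))) \<longlonglongrightarrow> exp L"
      by simp
    moreover have "eventually (\<lambda>n. exp ((?A n / n + s * (?\<Lambda> n / n)) / (1 - m / n))
        = exp ((?A n + s * ?\<Lambda> n) / real (n - m))) sequentially"
      using eventually_gt_at_top[of m]
      by eventually_elim (simp add: of_nat_diff field_simps)
    ultimately show ?thesis by (rule Lim_transform_eventually)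
  qed
  have "(\<lambda>n. exp ((?A n - m * ?\<Lambda> n) / real (n - m))) \<longlonglongrightarrow> exp L"
    using bound_lim[of "- real m"] by simp
  moreover have "(\<lambda>n. exp ((?A n + m * ?\<Lambda> n) / real (n - m))) \<longlonglongrightarrow> exp L"
    by (rule bound_lim)
  moreover have "eventually (\<lambda>n. exp ((?A n - m * ?\<Lambda> n) / real (n - m)) \<le> symmean (n - m) n x) sequentially"
    using eventually_gt_at_top[of m] by eventually_elim (rule symmean_complementary_bounds[OF x])
  moreover have "eventually (\<lambda>n. symmean (n - m) n x \<le> exp ((?A n + m * ?\<Lambda> n) / real (n - m))) sequentially"
    using eventually_gt_at_top[of m] by eventually_elim (rule symmean_complementary_bounds[OF x])
  ultimately show ?thesis by (rule tendsto_sandwich[rotated 2])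
qed

context ergodic_system
begin

lemma AE_tendsto_symmean:
  assumes f: "integrable M f" and m: "0 < m" and f_nonneg: "\<And>x. x \<in> space M \<Longrightarrow> 0 \<le> f x"
  shows "AE \<omega> in M. (\<lambda>n. symmean m n (\<lambda>i. f ((T ^^ i) \<omega>))) \<longlonglongrightarrow> integral\<^sup>L M f"
proof -
  have [measurable]: "f \<in> borel_measurable M" using f by auto
  define f_trunc where "f_trunc K x = min (f x) (real K)" for K :: nat and x
  have f_trunc: "integrable M (f_trunc K)" for K
    unfolding f_trunc_def by (rule Bochner_Integration.integrable_bound[OF f]) (auto simp: f_nonneg)
  have truncation_limit: "(\<lambda>K. integral\<^sup>L M (f_trunc K)) \<longlonglongrightarrow> integral\<^sup>L M f"
  proof (rule integral_dominated_convergence[where w="\<lambda>x. norm (f x)"])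
    show "AE x in M. norm (f_trunc K x) \<le> norm (f x)" for K
      using AE_space by eventually_elim (auto simp: f_trunc_def f_nonneg)
    show "AE x in M. (\<lambda>K. f_trunc K x) \<longlonglongrightarrow> f x"
    proof (rule AE_I2)
      fix x
      obtain N :: nat where "f x \<le> real N" using real_arch_simple by blast
      then have "eventually (\<lambda>K. f_trunc K x = f x) sequentially"
        unfolding eventually_sequentially f_trunc_def by (intro exI[of _ N]) auto
      then show "(\<lambda>K. f_trunc K x) \<longlonglongrightarrow> f x" by (rule tendsto_eventually)
    qed
  qed (use f f_trunc in auto)
  have "AE \<omega> in M. (\<lambda>n. birkhoff_sum f n \<omega> / n) \<longlonglongrightarrow> integral\<^sup>L M f"
    by (rule birkhoff_ergodic_theorem[OF f])
  moreover have "AE \<omega> in M. \<forall>K. (\<lambda>n. birkhoff_sum (f_trunc K) n \<omega> / n) \<longlonglongrightarrow> integral\<^sup>L M (f_trunc K)"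
    unfolding AE_all_countable by (intro allI birkhoff_ergodic_theorem f_trunc)
  ultimately show ?thesis
    using AE_space
  proof eventually_elim
    case (elim \<omega>)
    show ?case
      by (rule tendsto_symmean_if_truncated_means[OF m, where \<mu>K="\<lambda>K. integral\<^sup>L M (f_trunc K)"])
        (use elim truncation_limit in \<open>auto simp: birkhoff_sum_def f_trunc_def f_nonneg funpow_T_in_space\<close>)
  qed
qed

lemma AE_tendsto_symmean_complementary:
  assumes [measurable]: "f \<in> borel_measurable M" and f_pos: "AE x in M. 0 < f x"
    and ln_f: "integrable M (\<lambda>x. ln (f x))"
  shows "AE \<omega> in M. (\<lambda>n. symmean (n - m) n (\<lambda>i. f ((T ^^ i) \<omega>)))
           \<longlonglongrightarrow> exp (integral\<^sup>L M (\<lambda>x. ln (f x)))"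
proof -
  have "AE \<omega> in M. \<forall>i. 0 < f ((T ^^ i) \<omega>)"
    unfolding AE_all_countable by (intro allI AE_comp_funpow_T[OF f_pos]) measurable
  moreover have "AE \<omega> in M. (\<lambda>n. birkhoff_sum (\<lambda>x. ln (f x)) n \<omega> / n) \<longlonglongrightarrow> integral\<^sup>L M (\<lambda>x. ln (f x))"
    by (rule birkhoff_ergodic_theorem[OF ln_f])
  ultimately show ?thesis
    by eventually_elim (auto intro: tendsto_symmean_complementary_if_log_mean simp: birkhoff_sum_def)
qed

end

theorem proposition3p1:
  fixes M :: "'a measure" and T :: "'a \<Rightarrow> 'a" and f :: "'a \<Rightarrow> real" and m :: nat
  assumes "prob_space M"
    and "ergodic M T"
    and "f \<in> borel_measurable M"
    and "\<And>x. x \<in> space M \<Longrightarrow> f x \<ge> 0"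
  shows "(integrable M f \<and> m > 0 \<longrightarrow>
           (AE \<omega> in M. (\<lambda>n. symmean m n (\<lambda>i. f ((T ^^ i) \<omega>)))
                          \<longlonglongrightarrow> integral\<^sup>L M f))
       \<and> ((AE x in M. f x > 0) \<and> integrable M (\<lambda>x. ln (f x)) \<longrightarrow>
           (AE \<omega> in M. (\<lambda>n. symmean (n - m) n (\<lambda>i. f ((T ^^ i) \<omega>)))
                          \<longlonglongrightarrow> exp (integral\<^sup>L M (\<lambda>x. ln (f x)))))"
proof -
  interpret ergodic_system M T
    using assms(1,2) by (rule ergodic_system.intro[OF _ ergodic_system_axioms.intro])
  show ?thesis
    using AE_tendsto_symmean[of f m] AE_tendsto_symmean_complementary[OF assms(3)] assms(4) by blast
qed

end
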